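(* Let $H$ be a complex Hilbert space and let $\Delta:K(H)\to K(H)$ be a weak-2-local derivation. Let $(p_n)$ be a sequence of mutually orthogonal minimal projections in $K(H)$, and let $\mathcal{B}$ be the commutative C$^*$-subalgebra of $K(H)$ generated by the $p_n$'s. Then $\Delta(a+b)=\Delta(a)+\Delta(b)$ for all $a,b\in\mathcal{B}$.
   Context: $K(H)$ is the C$^*$-algebra of compact operators on $H$. A derivation on a C$^*$-algebra $A$ is a linear map $D:A\to A$ with $D(ab)=D(a)b+aD(b)$. A (not necessarily linear) map $\Delta:A\to A$ is a weak-2-local derivation if for every $a,b\in A$ and every $\phi\in A^*$ there exists a derivation $D_{a,b,\phi}:A\to A$ such that $\phi\Delta(a)=\phi D_{a,b,\phi}(a)$ and $\phi\Delta(b)=\phi D_{a,b,\phi}(b)$. *)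

theory Defs
  imports "HOL-Analysis.Analysis"
begin

text \<open>The library has only real inner product spaces, so we introduce complex ones.
  The inner product is conjugate-linear in the first argument, linear in the second.\<close>

class complex_inner = real_normed_vector +
  fixes scaleC :: "complex \<Rightarrow> 'a \<Rightarrow> 'a" (infixr "*\<^sub>C" 75)
  fixes cinner :: "'a \<Rightarrow> 'a \<Rightarrow> complex"
  assumes scaleC_add_right: "a *\<^sub>C (x + y) = a *\<^sub>C x + a *\<^sub>C y"
  and scaleC_add_left: "(a + b) *\<^sub>C x = a *\<^sub>C x + b *\<^sub>C x"
  and scaleC_scaleC: "a *\<^sub>C (b *\<^sub>C x) = (a * b) *\<^sub>C x"
  and scaleC_one: "1 *\<^sub>C x = x"
  and scaleR_scaleC: "scaleR r x = complex_of_real r *\<^sub>C x"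
  and cinner_add_left: "cinner (x + y) z = cinner x z + cinner y z"
  and cinner_scaleC_left: "cinner (a *\<^sub>C x) y = cnj a * cinner x y"
  and cinner_commute: "cinner y x = cnj (cinner x y)"
  and cinner_norm: "cinner x x = complex_of_real ((norm x)\<^sup>2)"

class chilbert_space = complex_inner + complete_space

definition bounded_clinear :: "('a::complex_inner \<Rightarrow> 'b::complex_inner) \<Rightarrow> bool" where
  "bounded_clinear f \<longleftrightarrow> bounded_linear f \<and> (\<forall>c x. f (c *\<^sub>C x) = c *\<^sub>C f x)"

definition compact_ops :: "('h::chilbert_space \<Rightarrow> 'h) set" where
  "compact_ops = {T. bounded_clinear T \<and> compact (closure (T ` cball 0 1))}"

definition op_scale :: "complex \<Rightarrow> ('h::complex_inner \<Rightarrow> 'h) \<Rightarrow> ('h \<Rightarrow> 'h)" where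
  "op_scale c T = (\<lambda>x. c *\<^sub>C T x)"

definition op_add :: "('h::complex_inner \<Rightarrow> 'h) \<Rightarrow> ('h \<Rightarrow> 'h) \<Rightarrow> ('h \<Rightarrow> 'h)" where
  "op_add S T = (\<lambda>x. S x + T x)"

definition is_adjoint :: "('h::complex_inner \<Rightarrow> 'h) \<Rightarrow> ('h \<Rightarrow> 'h) \<Rightarrow> bool" where
  "is_adjoint T S \<longleftrightarrow> (\<forall>x y. cinner (T x) y = cinner x (S y))"

definition is_projection :: "('h::complex_inner \<Rightarrow> 'h) \<Rightarrow> bool" where
  "is_projection p \<longleftrightarrow> bounded_clinear p \<and> p \<circ> p = p \<and> is_adjoint p p"

text \<open>Minimal projection of K(H): a nonzero projection in K(H) with no projection of K(H)
  strictly between 0 and it (q \<le> p for projections means q = q p).\<close>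
definition minimal_projection :: "('h::chilbert_space \<Rightarrow> 'h) \<Rightarrow> bool" where
  "minimal_projection p \<longleftrightarrow> p \<in> compact_ops \<and> is_projection p \<and> p \<noteq> (\<lambda>x. 0) \<and>
     (\<forall>q \<in> compact_ops. is_projection q \<and> q \<circ> p = q \<longrightarrow> q = (\<lambda>x. 0) \<or> q = p)"

definition cstar_subalgebra :: "('h::chilbert_space \<Rightarrow> 'h) set \<Rightarrow> bool" where
  "cstar_subalgebra A \<longleftrightarrow> A \<subseteq> compact_ops \<and> (\<lambda>x. 0) \<in> A \<and>
     (\<forall>S\<in>A. \<forall>T\<in>A. op_add S T \<in> A) \<and>
     (\<forall>c. \<forall>T\<in>A. op_scale c T \<in> A) \<and>
     (\<forall>S\<in>A. \<forall>T\<in>A. S \<circ> T \<in> A) \<and>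
     (\<forall>T\<in>A. \<exists>S\<in>A. is_adjoint T S) \<and>
     (\<forall>f T. (\<forall>n. f n \<in> A) \<and> bounded_clinear T \<and>
        (\<lambda>n. onorm (\<lambda>x. f n x - T x)) \<longlonglongrightarrow> 0 \<longrightarrow> T \<in> A)"

definition generated_cstar :: "('h::chilbert_space \<Rightarrow> 'h) set \<Rightarrow> ('h \<Rightarrow> 'h) set" where
  "generated_cstar S = \<Inter>{A. cstar_subalgebra A \<and> S \<subseteq> A}"

definition derivation_K :: "(('h::chilbert_space \<Rightarrow> 'h) \<Rightarrow> ('h \<Rightarrow> 'h)) \<Rightarrow> bool" where
  "derivation_K D \<longleftrightarrow> (\<forall>a\<in>compact_ops. D a \<in> compact_ops) \<and>
     (\<forall>a\<in>compact_ops. \<forall>b\<in>compact_ops. D (op_add a b) = op_add (D a) (D b)) \<and>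
     (\<forall>c. \<forall>a\<in>compact_ops. D (op_scale c a) = op_scale c (D a)) \<and>
     (\<forall>a\<in>compact_ops. \<forall>b\<in>compact_ops. D (a \<circ> b) = op_add (D a \<circ> b) (a \<circ> D b))"

definition dual_K :: "(('h::chilbert_space \<Rightarrow> 'h) \<Rightarrow> complex) \<Rightarrow> bool" where
  "dual_K \<phi> \<longleftrightarrow>
     (\<forall>a\<in>compact_ops. \<forall>b\<in>compact_ops. \<phi> (op_add a b) = \<phi> a + \<phi> b) \<and>
     (\<forall>c. \<forall>a\<in>compact_ops. \<phi> (op_scale c a) = c * \<phi> a) \<and>
     (\<exists>C. \<forall>a\<in>compact_ops. norm (\<phi> a) \<le> C * onorm a)"

definition weak_2_local_derivation_K :: "(('h::chilbert_space \<Rightarrow> 'h) \<Rightarrow> ('h \<Rightarrow> 'h)) \<Rightarrow> bool" where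
  "weak_2_local_derivation_K \<Delta> \<longleftrightarrow> (\<forall>a\<in>compact_ops. \<Delta> a \<in> compact_ops) \<and>
     (\<forall>a\<in>compact_ops. \<forall>b\<in>compact_ops. \<forall>\<phi>. dual_K \<phi> \<longrightarrow>
        (\<exists>D. derivation_K D \<and> \<phi> (\<Delta> a) = \<phi> (D a) \<and> \<phi> (\<Delta> b) = \<phi> (D b)))"

end

theory Submission
  imports Defs
begin

text \<open>Write every \<open>p\<^sub>n\<close> as the rank-one projection onto a unit vector \<open>e\<^sub>n\<close>; the \<open>e\<^sub>n\<close> are
  orthonormal. Let \<open>W\<close> be their orthogonal complement. The compact operators that are diagonal
  in the \<open>e\<^sub>n\<close> and vanish on \<open>W\<close>, together with their adjoints, form a C*-subalgebra, so they
  contain the algebra generated by the \<open>p\<^sub>n\<close>. For such an \<open>a\<close> with eigenvalues \<open>\<lambda>\<^sub>n(a)\<close> the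
  Leibniz rule, applied to \<open>a p\<^sub>m = \<lambda>\<^sub>m(a) p\<^sub>m\<close> and to \<open>a r\<^sub>x = 0\<close> (\<open>r\<^sub>x\<close> the rank-one operator of
  \<open>x \<in> W\<close>), shows that for every derivation \<open>D\<close> each matrix entry \<open>\<langle>y, D(a) x\<rangle>\<close> with \<open>x, y\<close> among
  the \<open>e\<^sub>n\<close> and \<open>W\<close> is a multiple of the corresponding entry of \<open>D(p\<^sub>m)\<close> or \<open>D(r\<^sub>x)\<close>, with a factor
  that is linear in the \<open>\<lambda>\<^sub>n(a)\<close>. Weak-2-locality at the pair \<open>(a, p\<^sub>m)\<close> resp. \<open>(a, r\<^sub>x)\<close> and the
  functional \<open>c \<mapsto> \<langle>y, c x\<rangle>\<close> carries these relations over to \<open>\<Delta>\<close>, so these entries of \<open>\<Delta>\<close> are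
  additive on the algebra. As the \<open>e\<^sub>n\<close> and \<open>W\<close> span a dense subspace, \<open>\<Delta>\<close> itself is additive there.\<close>

section \<open>Complex inner product spaces\<close>

lemma scaleC_zero_left [simp]: "(0::complex) *\<^sub>C (x::'a::complex_inner) = 0"
  using scaleR_scaleC[of 0 x] by simp

lemma scaleC_zero_right [simp]: "(a::complex) *\<^sub>C (0::'a::complex_inner) = 0"
  by (metis mult_zero_right scaleC_scaleC scaleC_zero_left)

lemma scaleC_minus_left: "(- a::complex) *\<^sub>C (x::'a::complex_inner) = - (a *\<^sub>C x)"
proof -
  have "(- a) *\<^sub>C x = complex_of_real (-1) *\<^sub>C (a *\<^sub>C x)"
    by (simp add: scaleC_scaleC)
  also have "\<dots> = - (a *\<^sub>C x)"
    using scaleR_scaleC[of "-1" "a *\<^sub>C x"] by simp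
  finally show ?thesis .
qed

lemma scaleC_minus_right: "(a::complex) *\<^sub>C (- x::'a::complex_inner) = - (a *\<^sub>C x)"
  by (metis mult.commute scaleC_minus_left scaleC_one scaleC_scaleC)

lemma scaleC_diff_right: "(a::complex) *\<^sub>C (x - y::'a::complex_inner) = a *\<^sub>C x - a *\<^sub>C y"
  by (simp only: diff_conv_add_uminus scaleC_add_right scaleC_minus_right)

lemma cinner_add_right: "cinner (x::'a::complex_inner) (y + z) = cinner x y + cinner x z"
  by (metis cinner_add_left cinner_commute complex_cnj_add)

lemma cinner_scaleC_right: "cinner (x::'a::complex_inner) (a *\<^sub>C y) = a * cinner x y"
  by (metis cinner_commute cinner_scaleC_left complex_cnj_cnj complex_cnj_mult)

lemma cinner_zero_left [simp]: "cinner (0::'a::complex_inner) y = 0"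
  using cinner_scaleC_left[of 0 "0::'a" y] by simp

lemma cinner_zero_right [simp]: "cinner (x::'a::complex_inner) 0 = 0"
  by (subst cinner_commute) simp

lemma cinner_minus_right: "cinner (x::'a::complex_inner) (- y) = - cinner x y"
  by (metis add_eq_0_iff cinner_add_right cinner_zero_right neg_eq_iff_add_eq_0)

lemma cinner_minus_left: "cinner (- x::'a::complex_inner) y = - cinner x y"
  by (metis cinner_commute cinner_minus_right complex_cnj_minus)

lemma cinner_diff_right: "cinner (x::'a::complex_inner) (y - z) = cinner x y - cinner x z"
  by (simp only: diff_conv_add_uminus cinner_add_right cinner_minus_right)

lemma cinner_diff_left: "cinner (x - y::'a::complex_inner) z = cinner x z - cinner y z"
  by (simp only: diff_conv_add_uminus cinner_add_left cinner_minus_left)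

lemma cinner_sum_left: "cinner (sum f A) (x::'a::complex_inner) = (\<Sum>i\<in>A. cinner (f i) x)"
  by (induction A rule: infinite_finite_induct) (simp_all add: cinner_add_left)

lemma cinner_sum_right: "cinner (x::'a::complex_inner) (sum f A) = (\<Sum>i\<in>A. cinner x (f i))"
  by (induction A rule: infinite_finite_induct) (simp_all add: cinner_add_right)

lemma cinner_self_eq_0 [simp]: "cinner (x::'a::complex_inner) x = 0 \<longleftrightarrow> x = 0"
  by (simp add: cinner_norm)

lemma cinner_ext_right: "(\<And>y. cinner y (u::'a::complex_inner) = cinner y v) \<Longrightarrow> u = v"
  by (metis cinner_diff_right cinner_self_eq_0 eq_iff_diff_eq_0)

lemma cnj_mult_self: "cnj z * z = complex_of_real ((cmod z)\<^sup>2)"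
  by (simp only: mult.commute[of "cnj z"] complex_norm_square)

lemma norm_scaleC: "norm (a *\<^sub>C (x::'a::complex_inner)) = cmod a * norm x"
proof -
  have "complex_of_real ((norm (a *\<^sub>C x))\<^sup>2) = cinner (a *\<^sub>C x) (a *\<^sub>C x)"
    by (rule cinner_norm[symmetric])
  also have "\<dots> = cnj a * a * cinner x x"
    by (simp add: cinner_scaleC_left cinner_scaleC_right)
  also have "cnj a * a = complex_of_real ((cmod a)\<^sup>2)"
    by (rule cnj_mult_self)
  finally have "(norm (a *\<^sub>C x))\<^sup>2 = (cmod a * norm x)\<^sup>2"
    by (simp only: cinner_norm power_mult_distrib of_real_mult[symmetric] of_real_eq_iff)
  then show ?thesis
    by (simp add: power2_eq_iff_nonneg)
qed

lemma scaleC_eq_0_iff: "c *\<^sub>C (x::'a::complex_inner) = 0 \<longleftrightarrow> c = 0 \<or> x = 0"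
  by (metis mult_eq_0_iff norm_eq_zero norm_scaleC scaleC_zero_left scaleC_zero_right)

text \<open>The Cauchy-Schwarz inequality, from \<open>\<parallel>y - t x\<parallel>\<^sup>2 \<ge> 0\<close> for \<open>t = \<langle>x, y\<rangle> / \<parallel>x\<parallel>\<^sup>2\<close>.\<close>
lemma norm_cinner_le: "cmod (cinner (x::'a::complex_inner) y) \<le> norm x * norm y"
proof (cases "x = 0")
  case True
  then show ?thesis by simp
next
  case False
  define c where "c = cinner x y"
  define n where "n = (norm x)\<^sup>2"
  define t where "t = c / complex_of_real n"
  have xx: "cinner x x = complex_of_real n"
    unfolding n_def by (rule cinner_norm)
  have n_pos: "n > 0"
    using False unfolding n_def by simp
  have yx: "cinner y x = cnj c"
    unfolding c_def by (rule cinner_commute)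
  have "complex_of_real ((norm (y - t *\<^sub>C x))\<^sup>2) = cinner (y - t *\<^sub>C x) (y - t *\<^sub>C x)"
    by (rule cinner_norm[symmetric])
  also have "\<dots> = cinner y y - t * cinner y x - cnj t * cinner x y + cnj t * t * cinner x x"
    by (simp add: cinner_diff_left cinner_diff_right cinner_scaleC_left
        cinner_scaleC_right algebra_simps)
  also have "\<dots> = cinner y y - c * cnj c / complex_of_real n"
    using n_pos unfolding t_def yx xx c_def[symmetric] by (simp add: field_simps)
  also have "c * cnj c = complex_of_real ((cmod c)\<^sup>2)"
    by (rule complex_norm_square[symmetric])
  finally have "complex_of_real ((norm (y - t *\<^sub>C x))\<^sup>2) =
      complex_of_real ((norm y)\<^sup>2 - (cmod c)\<^sup>2 / n)"
    by (simp add: cinner_norm[of y])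
  then have "(norm (y - t *\<^sub>C x))\<^sup>2 = (norm y)\<^sup>2 - (cmod c)\<^sup>2 / n"
    using of_real_eq_iff by blast
  then have "(cmod c)\<^sup>2 / n \<le> (norm y)\<^sup>2"
    by (metis diff_ge_0_iff_ge zero_le_power2)
  then have "(cmod c)\<^sup>2 \<le> (norm x * norm y)\<^sup>2"
    using n_pos unfolding n_def by (simp add: divide_le_eq power_mult_distrib mult.commute)
  then show ?thesis
    unfolding c_def by (simp add: power2_le_iff_abs_le)
qed

lemma bounded_linear_cinner_right: "bounded_linear (\<lambda>z. cinner (w::'a::complex_inner) z)"
proof (rule bounded_linear_intro[where K="norm w"])
  show "cinner w (r *\<^sub>R x) = r *\<^sub>R cinner w x" for r x
    by (simp add: scaleR_scaleC cinner_scaleC_right scaleR_conv_of_real)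
  show "norm (cinner w x) \<le> norm x * norm w" for x
    using norm_cinner_le[of w x] by (simp add: mult.commute)
qed (rule cinner_add_right)

lemma bounded_linear_cinner_left: "bounded_linear (\<lambda>z. cinner z (w::'a::complex_inner))"
proof (rule bounded_linear_intro[where K="norm w"])
  show "cinner (r *\<^sub>R x) w = r *\<^sub>R cinner x w" for r x
    by (simp add: scaleR_scaleC cinner_scaleC_left scaleR_conv_of_real)
  show "norm (cinner x w) \<le> norm x * norm w" for x
    by (rule norm_cinner_le)
qed (rule cinner_add_left)

lemma tendsto_cinner_right:
  "(f \<longlongrightarrow> l) F \<Longrightarrow> ((\<lambda>k. cinner w (f k)) \<longlongrightarrow> cinner (w::'a::complex_inner) l) F"
  by (rule bounded_linear.tendsto[OF bounded_linear_cinner_right])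

lemma tendsto_cinner_left:
  "(f \<longlongrightarrow> l) F \<Longrightarrow> ((\<lambda>k. cinner (f k) w) \<longlongrightarrow> cinner l (w::'a::complex_inner)) F"
  by (rule bounded_linear.tendsto[OF bounded_linear_cinner_left])

lemma bounded_linear_scaleC_left: "bounded_linear (\<lambda>c::complex. c *\<^sub>C (v::'a::complex_inner))"
proof (rule bounded_linear_intro[where K="norm v"])
  show "(r *\<^sub>R c) *\<^sub>C v = r *\<^sub>R (c *\<^sub>C v)" for r c
    by (simp add: scaleR_scaleC scaleC_scaleC scaleR_conv_of_real)
  show "norm (c *\<^sub>C v) \<le> norm c * norm v" for c
    by (simp add: norm_scaleC)
qed (rule scaleC_add_left)

section \<open>Bounded complex-linear operators and compact operators\<close>

lemma bounded_clinear_imp_bounded_linear: "bounded_clinear T \<Longrightarrow> bounded_linear T"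
  unfolding bounded_clinear_def by simp

lemma bounded_clinear_scaleC: "bounded_clinear T \<Longrightarrow> T (c *\<^sub>C x) = c *\<^sub>C T x"
  unfolding bounded_clinear_def by simp

lemma bounded_clinear_add: "bounded_clinear T \<Longrightarrow> T (x + y) = T x + T y"
  unfolding bounded_clinear_def by (simp add: linear_simps)

lemma bounded_clinear_zero: "bounded_clinear T \<Longrightarrow> T 0 = 0"
  unfolding bounded_clinear_def by (simp add: linear_simps)

lemma bounded_clinear_tendsto:
  "bounded_clinear T \<Longrightarrow> (f \<longlongrightarrow> l) F \<Longrightarrow> ((\<lambda>k. T (f k)) \<longlongrightarrow> T l) F"
  by (rule bounded_linear.tendsto[OF bounded_clinear_imp_bounded_linear])

lemma bounded_clinear_diff:
  assumes "bounded_clinear S" "bounded_clinear T"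
  shows "bounded_clinear (\<lambda>x. S x - T x)"
  using assms bounded_linear_sub[of S T]
  unfolding bounded_clinear_def by (simp add: scaleC_diff_right)

lemma bounded_clinear_op_add:
  assumes "bounded_clinear S" "bounded_clinear T"
  shows "bounded_clinear (op_add S T)"
  using assms bounded_linear_add[of S T]
  unfolding bounded_clinear_def op_add_def by (simp add: scaleC_add_right)

lemma bounded_clinear_scaleC_right: "bounded_clinear (\<lambda>x. c *\<^sub>C (x::'a::complex_inner))"
proof -
  have "bounded_linear (\<lambda>x. c *\<^sub>C (x::'a))"
  proof (rule bounded_linear_intro[where K="cmod c"])
    show "c *\<^sub>C (r *\<^sub>R x) = r *\<^sub>R (c *\<^sub>C x)" for r and x :: 'a
      by (simp add: scaleR_scaleC scaleC_scaleC mult.commute)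
    show "norm (c *\<^sub>C x) \<le> norm x * cmod c" for x :: 'a
      by (simp add: norm_scaleC mult.commute)
  qed (rule scaleC_add_right)
  then show ?thesis
    unfolding bounded_clinear_def by (simp add: scaleC_scaleC mult.commute)
qed

lemma compact_ops_imp_bounded_clinear: "T \<in> compact_ops \<Longrightarrow> bounded_clinear T"
  unfolding compact_ops_def by simp

lemma compact_closure_of_subset:
  "compact K \<Longrightarrow> S \<subseteq> K \<Longrightarrow> compact (closure (S::'a::metric_space set))"
  by (metis closed_Int_compact closed_closure closure_minimal compact_imp_closed inf.absorb_iff1)

definition rank_one :: "'a::complex_inner \<Rightarrow> 'a \<Rightarrow> 'a" where
  "rank_one x = (\<lambda>z. cinner x z *\<^sub>C x)"

lemma rank_one_bounded_clinear: "bounded_clinear (rank_one (v::'a::complex_inner))"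
proof -
  have "bounded_linear (\<lambda>z. cinner v z *\<^sub>C v)"
    using bounded_linear_compose[OF bounded_linear_scaleC_left[of v] bounded_linear_cinner_right[of v]]
    by simp
  then show ?thesis
    unfolding bounded_clinear_def rank_one_def by (simp add: cinner_scaleC_right scaleC_scaleC)
qed

lemma rank_one_compact: "rank_one (v::'h::chilbert_space) \<in> compact_ops"
proof -
  let ?K = "(\<lambda>c. c *\<^sub>C v) ` cball 0 (norm v)"
  have "compact ?K"
    by (intro compact_continuous_image linear_continuous_on bounded_linear_scaleC_left) simp
  moreover have "rank_one v ` cball 0 1 \<subseteq> ?K"
  proof
    fix w assume "w \<in> rank_one v ` cball 0 1"
    then obtain z where z: "norm z \<le> 1" "w = cinner v z *\<^sub>C v"
      by (auto simp: rank_one_def)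
    have "cmod (cinner v z) \<le> norm v * norm z"
      by (rule norm_cinner_le)
    also have "\<dots> \<le> norm v"
      using z(1) by (simp add: mult_left_le)
    finally show "w \<in> ?K"
      using z(2) by auto
  qed
  ultimately have "compact (closure (rank_one v ` cball 0 1))"
    by (rule compact_closure_of_subset)
  then show ?thesis
    unfolding compact_ops_def using rank_one_bounded_clinear by blast
qed

lemma rank_one_self_adjoint: "is_adjoint (rank_one x) (rank_one (x::'a::complex_inner))"
  unfolding is_adjoint_def rank_one_def
  by (simp add: cinner_scaleC_right cinner_scaleC_left cinner_commute[of _ x] mult.commute)

lemma compact_ops_zero: "(\<lambda>x. 0::'h::chilbert_space) \<in> compact_ops"
  using rank_one_compact[of "0::'h"] by (simp add: rank_one_def)

lemma compact_ops_op_add: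
  assumes S: "S \<in> compact_ops" and T: "T \<in> compact_ops"
  shows "op_add S T \<in> compact_ops"
proof -
  let ?K = "{x + y | x y. x \<in> closure (S ` cball 0 1) \<and> y \<in> closure (T ` cball 0 1)}"
  have "compact ?K"
    using S T unfolding compact_ops_def by (intro compact_sums) auto
  moreover have "op_add S T ` cball 0 1 \<subseteq> ?K"
  proof
    fix w assume "w \<in> op_add S T ` cball 0 1"
    then obtain z where z: "z \<in> cball 0 1" "w = S z + T z"
      unfolding op_add_def by auto
    have "S z \<in> closure (S ` cball 0 1)" "T z \<in> closure (T ` cball 0 1)"
      using z(1) closure_subset by (meson imageI subsetD)+
    then show "w \<in> ?K"
      using z(2) by blast
  qed
  ultimately have "compact (closure (op_add S T ` cball 0 1))"
    by (rule compact_closure_of_subset)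
  moreover have "bounded_clinear (op_add S T)"
    using S T by (intro bounded_clinear_op_add compact_ops_imp_bounded_clinear)
  ultimately show ?thesis
    unfolding compact_ops_def by blast
qed

lemma compact_ops_comp:
  assumes S: "bounded_clinear S" and T: "T \<in> compact_ops"
  shows "S \<circ> T \<in> compact_ops"
proof -
  let ?K = "S ` closure (T ` cball 0 1)"
  have "compact ?K"
    using T unfolding compact_ops_def
    by (intro compact_continuous_image linear_continuous_on bounded_clinear_imp_bounded_linear S)
      auto
  moreover have "(S \<circ> T) ` cball 0 1 \<subseteq> ?K"
  proof
    fix w assume "w \<in> (S \<circ> T) ` cball 0 1"
    then obtain z where z: "z \<in> cball 0 1" "w = S (T z)"
      by auto
    have "T z \<in> closure (T ` cball 0 1)"
      using z(1) closure_subset by (meson imageI subsetD)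
    then show "w \<in> ?K"
      using z(2) by blast
  qed
  ultimately have "compact (closure ((S \<circ> T) ` cball 0 1))"
    by (rule compact_closure_of_subset)
  moreover have "bounded_clinear (S \<circ> T)"
    using S compact_ops_imp_bounded_clinear[OF T] bounded_linear_compose[of S T]
    unfolding bounded_clinear_def by (auto simp: o_def)
  ultimately show ?thesis
    unfolding compact_ops_def by blast
qed

lemma compact_ops_op_scale: "T \<in> compact_ops \<Longrightarrow> op_scale c T \<in> compact_ops"
proof -
  have "op_scale c T = (\<lambda>x. c *\<^sub>C x) \<circ> T"
    unfolding op_scale_def by auto
  then show "T \<in> compact_ops \<Longrightarrow> op_scale c T \<in> compact_ops"
    using compact_ops_comp[OF bounded_clinear_scaleC_right] by simp
qed

lemma onorm_tendsto_imp_tendsto: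
  assumes "\<And>k. bounded_clinear (f k)" "bounded_clinear T"
    and "(\<lambda>k. onorm (\<lambda>x. f k x - T x)) \<longlonglongrightarrow> 0"
  shows "(\<lambda>k. f k z) \<longlonglongrightarrow> T z"
proof -
  have "norm (f k z - T z) \<le> onorm (\<lambda>x. f k x - T x) * norm z" for k
    by (rule onorm[OF bounded_clinear_imp_bounded_linear[OF bounded_clinear_diff[OF assms(1,2)]]])
  moreover have "(\<lambda>k. onorm (\<lambda>x. f k x - T x) * norm z) \<longlonglongrightarrow> 0"
    using tendsto_mult_left_zero[OF assms(3)] by simp
  ultimately have "(\<lambda>k. f k z - T z) \<longlonglongrightarrow> 0"
    using Lim_null_comparison[of "\<lambda>k. f k z - T z" "\<lambda>k. onorm (\<lambda>x. f k x - T x) * norm z"]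
    by (simp add: always_eventually)
  then show ?thesis
    by (rule LIM_zero_cancel)
qed

text \<open>An \<open>\<epsilon>/3\<close> argument: a finite \<open>\<epsilon>/3\<close>-net for the image of the unit ball under a nearby
  compact operator is an \<open>\<epsilon>\<close>-net for that of the limit.\<close>
lemma compact_ops_closed:
  fixes f :: "nat \<Rightarrow> 'h::chilbert_space \<Rightarrow> 'h"
  assumes fc: "\<And>k. f k \<in> compact_ops" and bT: "bounded_clinear T"
    and lim: "(\<lambda>k. onorm (\<lambda>x. f k x - T x)) \<longlonglongrightarrow> 0"
  shows "T \<in> compact_ops"
proof -
  have "compact (closure (T ` cball 0 1))"
    unfolding compact_eq_totally_bounded
  proof (intro conjI allI impI)
    show "complete (closure (T ` cball 0 1))"
      by (simp add: complete_eq_closed)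
  next
    fix \<epsilon> :: real assume "\<epsilon> > 0"
    then have \<epsilon>3: "\<epsilon>/3 > 0" by simp
    obtain N where N: "onorm (\<lambda>x. f N x - T x) < \<epsilon>/3"
      using order_tendstoD(2)[OF lim \<epsilon>3] unfolding eventually_sequentially by (meson order_refl)
    obtain K where K: "finite K" "closure (f N ` cball 0 1) \<subseteq> (\<Union>x\<in>K. ball x (\<epsilon>/3))"
      using fc[of N] \<epsilon>3 unfolding compact_ops_def compact_eq_totally_bounded by blast
    have bl: "bounded_linear (\<lambda>x. f N x - T x)"
      by (intro bounded_clinear_imp_bounded_linear bounded_clinear_diff
          compact_ops_imp_bounded_clinear fc bT)
    have "closure (T ` cball 0 1) \<subseteq> (\<Union>x\<in>K. ball x \<epsilon>)"
    proof
      fix w assume "w \<in> closure (T ` cball 0 1)"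
      then obtain v where "v \<in> T ` cball 0 1" "dist v w < \<epsilon>/3"
        using closure_approachable \<epsilon>3 by blast
      then obtain z where z: "norm z \<le> 1" "dist (T z) w < \<epsilon>/3"
        by auto
      have "f N z \<in> closure (f N ` cball 0 1)"
        using z(1) closure_subset[of "f N ` cball 0 1"] by auto
      then obtain x where x: "x \<in> K" "dist x (f N z) < \<epsilon>/3"
        using K(2) by (auto simp: subset_iff)
      have "norm (f N z - T z) \<le> onorm (\<lambda>x. f N x - T x) * norm z"
        using onorm[OF bl] by blast
      also have "\<dots> \<le> onorm (\<lambda>x. f N x - T x)"
        using z(1) onorm_pos_le[OF bl] by (simp add: mult_left_le)
      finally have "dist (f N z) (T z) < \<epsilon>/3"
        using N by (simp add: dist_norm)
      then have "dist x w < \<epsilon>"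
        using x(2) z(2) dist_triangle[of x w "f N z"] dist_triangle[of "f N z" w "T z"] by linarith
      then show "w \<in> (\<Union>x\<in>K. ball x \<epsilon>)"
        using x(1) by auto
    qed
    then show "\<exists>k. finite k \<and> closure (T ` cball 0 1) \<subseteq> (\<Union>x\<in>k. ball x \<epsilon>)"
      using K(1) by blast
  qed
  then show ?thesis
    unfolding compact_ops_def using bT by blast
qed

lemma is_adjoint_sym: "is_adjoint a S \<Longrightarrow> is_adjoint S (a::'a::complex_inner \<Rightarrow> 'a)"
  unfolding is_adjoint_def by (metis cinner_commute)

lemma is_adjoint_diff:
  "is_adjoint a S \<Longrightarrow> is_adjoint b T \<Longrightarrow>
    is_adjoint (\<lambda>x. a x - b x) (\<lambda>y. S y - T (y::'a::complex_inner))"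
  unfolding is_adjoint_def by (simp add: cinner_diff_left cinner_diff_right)

lemma adjoint_add:
  assumes "is_adjoint a S"
  shows "S (x + y) = S x + S (y::'a::complex_inner)"
proof (rule cinner_ext_right)
  have S: "cinner u (S v) = cinner (a u) v" for u v
    using assms unfolding is_adjoint_def by simp
  show "cinner u (S (x + y)) = cinner u (S x + S y)" for u
    by (simp add: S cinner_add_right)
qed

lemma adjoint_scaleC:
  assumes "is_adjoint a S"
  shows "S (c *\<^sub>C x) = c *\<^sub>C S (x::'a::complex_inner)"
proof (rule cinner_ext_right)
  have S: "cinner u (S v) = cinner (a u) v" for u v
    using assms unfolding is_adjoint_def by simp
  show "cinner u (S (c *\<^sub>C x)) = cinner u (c *\<^sub>C S x)" for u
    by (simp add: S cinner_scaleC_right)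
qed

lemma norm_adjoint_le:
  assumes bl: "bounded_linear F" and adj: "is_adjoint F G"
  shows "norm (G z) \<le> onorm F * norm (z::'a::complex_inner)"
proof (cases "G z = 0")
  case True
  then show ?thesis
    using onorm_pos_le[OF bl] by simp
next
  case False
  have "complex_of_real ((norm (G z))\<^sup>2) = cinner (G z) (G z)"
    by (rule cinner_norm[symmetric])
  also have "\<dots> = cinner (F (G z)) z"
    using adj unfolding is_adjoint_def by simp
  finally have "(norm (G z))\<^sup>2 = cmod (cinner (F (G z)) z)"
    by (metis norm_of_real abs_of_nonneg zero_le_power2)
  also have "\<dots> \<le> norm (F (G z)) * norm z"
    by (rule norm_cinner_le)
  also have "\<dots> \<le> onorm F * norm (G z) * norm z"
    by (intro mult_right_mono onorm[OF bl]) simp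
  finally show ?thesis
    using False by (simp add: power2_eq_square algebra_simps)
qed

lemma onorm_adjoint_le:
  assumes "bounded_linear F" "is_adjoint F (G::'a::complex_inner \<Rightarrow> 'a)"
  shows "onorm G \<le> onorm F"
  by (rule onorm_bound[OF onorm_pos_le[OF assms(1)] norm_adjoint_le[OF assms]])

lemma adjoint_bounded_clinear:
  assumes bl: "bounded_linear F" and adj: "is_adjoint F (G::'a::complex_inner \<Rightarrow> 'a)"
  shows "bounded_clinear G"
proof -
  have "bounded_linear G"
  proof (rule bounded_linear_intro[where K="onorm F"])
    show "G (x + y) = G x + G y" for x y
      using adj by (rule adjoint_add)
    show "G (r *\<^sub>R x) = r *\<^sub>R G x" for r x
      using adjoint_scaleC[OF adj] by (simp add: scaleR_scaleC)
    show "norm (G x) \<le> norm x * onorm F" for x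
      using norm_adjoint_le[OF bl adj] by (simp add: mult.commute)
  qed
  then show ?thesis
    unfolding bounded_clinear_def using adjoint_scaleC[OF adj] by blast
qed

lemma onorm_diff_triangle:
  assumes "bounded_linear (\<lambda>x. a x - c x)" "bounded_linear (\<lambda>x. b x - c x)"
  shows "onorm (\<lambda>x. a x - b x) \<le>
    onorm (\<lambda>x. a x - c x) + onorm (\<lambda>x. b x - (c x::'b::real_normed_vector))"
proof -
  have "onorm (\<lambda>x. (a x - c x) + - (b x - c x)) \<le>
      onorm (\<lambda>x. a x - c x) + onorm (\<lambda>x. - (b x - c x))"
    by (rule onorm_triangle[OF assms(1) bounded_linear_minus[OF assms(2)]])
  moreover have "(\<lambda>x. (a x - c x) + - (b x - c x)) = (\<lambda>x. a x - b x)"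
    by auto
  moreover have "onorm (\<lambda>x. - (b x - c x)) = onorm (\<lambda>x. b x - c x)"
    by (rule onorm_neg)
  ultimately show ?thesis
    by simp
qed

lemma Cauchy_if_dist_le_null:
  fixes X :: "nat \<Rightarrow> 'a::metric_space"
  assumes "\<And>m n. dist (X m) (X n) \<le> c m + c n" and "c \<longlonglongrightarrow> 0"
  shows "Cauchy X"
proof (rule metric_CauchyI)
  fix \<epsilon> :: real assume "\<epsilon> > 0"
  then have "\<forall>\<^sub>F k in sequentially. c k < \<epsilon>/2"
    by (intro order_tendstoD(2)[OF assms(2)]) simp
  then obtain M where M: "\<And>k. k \<ge> M \<Longrightarrow> c k < \<epsilon>/2"
    unfolding eventually_sequentially by blast
  have "dist (X m) (X n) < \<epsilon>" if "m \<ge> M" "n \<ge> M" for m n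
    using assms(1)[of m n] M[OF that(1)] M[OF that(2)] by linarith
  then show "\<exists>M. \<forall>m\<ge>M. \<forall>n\<ge>M. dist (X m) (X n) < \<epsilon>"
    by blast
qed

text \<open>As \<open>\<parallel>a\<^sup>*\<parallel> \<le> \<parallel>a\<parallel>\<close>, the adjoints of a norm-convergent sequence are pointwise Cauchy; their
  pointwise limit is the adjoint of the limit.\<close>
lemma adjoint_of_limit:
  fixes f g :: "nat \<Rightarrow> 'h::chilbert_space \<Rightarrow> 'h"
  assumes bf: "\<And>k. bounded_clinear (f k)" and adj: "\<And>k. is_adjoint (f k) (g k)"
    and bT: "bounded_clinear T"
    and lim: "(\<lambda>k. onorm (\<lambda>x. f k x - T x)) \<longlonglongrightarrow> 0"
  shows "\<exists>S. is_adjoint T S \<and> bounded_clinear S \<and> (\<lambda>k. onorm (\<lambda>x. g k x - S x)) \<longlonglongrightarrow> 0"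
proof -
  define d where "d k = onorm (\<lambda>x. f k x - T x)" for k
  have bl_diff: "bounded_linear (\<lambda>x. f j x - f' x)" if "bounded_clinear f'" for j f'
    by (intro bounded_clinear_imp_bounded_linear bounded_clinear_diff bf that)
  have g_diff: "norm (g j z - g k z) \<le> (d j + d k) * norm z" for j k z
  proof -
    have "norm (g j z - g k z) \<le> onorm (\<lambda>x. f j x - f k x) * norm z"
      by (rule norm_adjoint_le[OF bl_diff[OF bf] is_adjoint_diff[OF adj adj]])
    also have "\<dots> \<le> (d j + d k) * norm z"
      unfolding d_def by (intro mult_right_mono onorm_diff_triangle bl_diff bT) simp
    finally show ?thesis .
  qed
  have "Cauchy (\<lambda>k. g k z)" for z
  proof (rule Cauchy_if_dist_le_null)
    show "dist (g m z) (g n z) \<le> d m * norm z + d n * norm z" for m n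
      using g_diff by (simp add: dist_norm algebra_simps)
    show "(\<lambda>k. d k * norm z) \<longlonglongrightarrow> 0"
      using tendsto_mult_left_zero[OF lim] unfolding d_def .
  qed
  define S where "S z = lim (\<lambda>k. g k z)" for z
  have gS: "(\<lambda>k. g k z) \<longlonglongrightarrow> S z" for z
    unfolding S_def using \<open>Cauchy (\<lambda>k. g k z)\<close>
    by (simp add: Cauchy_convergent_iff convergent_LIMSEQ_iff)
  have adjS: "is_adjoint T S"
    unfolding is_adjoint_def
  proof (intro allI)
    fix x y
    have "(\<lambda>k. cinner (f k x) y) \<longlonglongrightarrow> cinner (T x) y"
      by (intro tendsto_cinner_left onorm_tendsto_imp_tendsto bf bT lim)
    moreover have "(\<lambda>k. cinner (f k x) y) \<longlonglongrightarrow> cinner x (S y)"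
      using tendsto_cinner_right[OF gS] adj unfolding is_adjoint_def by simp
    ultimately show "cinner (T x) y = cinner x (S y)"
      by (rule LIMSEQ_unique)
  qed
  have bS: "bounded_clinear S"
    by (rule adjoint_bounded_clinear[OF bounded_clinear_imp_bounded_linear[OF bT] adjS])
  have "(\<lambda>k. onorm (\<lambda>x. g k x - S x)) \<longlonglongrightarrow> 0"
  proof (rule Lim_null_comparison[OF always_eventually lim], intro allI)
    fix k
    have "onorm (\<lambda>x. g k x - S x) \<le> onorm (\<lambda>x. f k x - T x)"
      by (rule onorm_adjoint_le[OF bl_diff[OF bT] is_adjoint_diff[OF adj adjS]])
    moreover have "0 \<le> onorm (\<lambda>x. g k x - S x)"
      using adjoint_bounded_clinear[OF bounded_clinear_imp_bounded_linear[OF bf] adj] bS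
      by (intro onorm_pos_le bounded_clinear_imp_bounded_linear bounded_clinear_diff)
    ultimately show "norm (onorm (\<lambda>x. g k x - S x)) \<le> onorm (\<lambda>x. f k x - T x)"
      by simp
  qed
  then show ?thesis
    using adjS bS by blast
qed

lemma rank_one_is_projection:
  assumes "norm e = 1"
  shows "is_projection (rank_one (e::'h::chilbert_space))"
proof -
  have "cinner e e = 1"
    using assms by (simp add: cinner_norm)
  then have "rank_one e \<circ> rank_one e = rank_one e"
    by (auto simp: rank_one_def cinner_scaleC_right)
  then show ?thesis
    unfolding is_projection_def using rank_one_bounded_clinear rank_one_self_adjoint by blast
qed

text \<open>The projection onto a unit vector in the range of \<open>p\<close> lies below \<open>p\<close>, so by minimality it
  is \<open>p\<close>.\<close>
lemma minimal_projection_rank_one: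
  fixes p :: "'h::chilbert_space \<Rightarrow> 'h"
  assumes "minimal_projection p"
  shows "\<exists>e. norm e = 1 \<and> p = rank_one e"
proof -
  have bp: "bounded_clinear p" and idem: "p \<circ> p = p" and adj: "is_adjoint p p"
    and minimal: "\<And>q. q \<in> compact_ops \<Longrightarrow> is_projection q \<Longrightarrow> q \<circ> p = q \<Longrightarrow>
      q = (\<lambda>x. 0) \<or> q = p"
    using assms unfolding minimal_projection_def is_projection_def by auto
  obtain z where z: "p z \<noteq> 0"
    using assms unfolding minimal_projection_def by auto
  define e where "e = complex_of_real (1 / norm (p z)) *\<^sub>C p z"
  have e_unit: "norm e = 1"
    unfolding e_def using z by (simp add: norm_scaleC norm_divide)
  then have ee: "cinner e e = 1"
    by (simp add: cinner_norm)
  have "p (p z) = p z"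
    using idem by (metis comp_apply)
  then have pe: "p e = e"
    unfolding e_def by (simp add: bounded_clinear_scaleC[OF bp])
  have "is_projection (rank_one e)"
    using e_unit by (rule rank_one_is_projection)
  moreover have "rank_one e \<circ> p = rank_one e"
  proof
    fix w
    have "cinner e (p w) = cinner (p e) w"
      using adj unfolding is_adjoint_def by simp
    then show "(rank_one e \<circ> p) w = rank_one e w"
      using pe by (simp add: rank_one_def)
  qed
  moreover have "rank_one e \<noteq> (\<lambda>x. 0)"
  proof
    assume "rank_one e = (\<lambda>x. 0)"
    then have "rank_one e e = 0"
      by simp
    then show False
      using ee e_unit by (simp add: rank_one_def scaleC_one)
  qed
  ultimately have "rank_one e = p"
    using minimal[OF rank_one_compact] by blast
  then show ?thesis
    using e_unit by blast
qed

lemma rank_one_comp_eq_0_imp_orthogonal: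
  assumes "e \<noteq> 0" "f \<noteq> 0" and "rank_one e \<circ> rank_one f = (\<lambda>x. 0::'a::complex_inner)"
  shows "cinner e f = 0"
proof -
  have "(cinner f f * cinner e f) *\<^sub>C e = 0"
    using fun_cong[OF assms(3), of f]
    by (simp add: rank_one_def cinner_scaleC_right scaleC_scaleC mult.commute)
  then show ?thesis
    using assms(1,2) by (simp add: scaleC_eq_0_iff)
qed

section \<open>The algebra of operators diagonal in an orthonormal family\<close>

locale orthonormal_family =
  fixes e :: "nat \<Rightarrow> 'h::chilbert_space" and I :: "nat set"
  assumes norm_e: "n \<in> I \<Longrightarrow> norm (e n) = 1"
    and orthogonal_e: "n \<in> I \<Longrightarrow> m \<in> I \<Longrightarrow> n \<noteq> m \<Longrightarrow> cinner (e n) (e m) = 0"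
begin

lemma cinner_e_e: "n \<in> I \<Longrightarrow> m \<in> I \<Longrightarrow> cinner (e n) (e m) = (if n = m then 1 else 0)"
  using norm_e orthogonal_e by (simp add: cinner_norm)

definition complement :: "'h set" where
  "complement = {y. \<forall>n\<in>I. cinner (e n) y = 0}"

definition eigenvalue :: "nat \<Rightarrow> ('h \<Rightarrow> 'h) \<Rightarrow> complex" where
  "eigenvalue n a = cinner (e n) (a (e n))"

text \<open>The conditions on \<open>cinner (e n) (a z)\<close> and \<open>cinner y (a z)\<close> say that the adjoint of \<open>a\<close> is
  diagonal as well; they make the class closed under adjoints and norm limits.\<close>
definition diagonal :: "('h \<Rightarrow> 'h) \<Rightarrow> bool" where
  "diagonal a \<longleftrightarrow>
    (\<forall>n\<in>I. a (e n) = eigenvalue n a *\<^sub>C e n \<and> (\<forall>z. cinner (e n) (a z) = eigenvalue n a * cinner (e n) z)) \<and>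
    (\<forall>y\<in>complement. a y = 0 \<and> (\<forall>z. cinner y (a z) = 0))"

definition diagonal_algebra :: "('h \<Rightarrow> 'h) set" where
  "diagonal_algebra = {a \<in> compact_ops. diagonal a \<and> (\<exists>S\<in>compact_ops. is_adjoint a S)}"

lemma diagonal_apply_e: "diagonal a \<Longrightarrow> n \<in> I \<Longrightarrow> a (e n) = eigenvalue n a *\<^sub>C e n"
  and diagonal_cinner_e: "diagonal a \<Longrightarrow> n \<in> I \<Longrightarrow> cinner (e n) (a z) = eigenvalue n a * cinner (e n) z"
  and diagonal_apply_complement: "diagonal a \<Longrightarrow> y \<in> complement \<Longrightarrow> a y = 0"
  and diagonal_cinner_complement: "diagonal a \<Longrightarrow> y \<in> complement \<Longrightarrow> cinner y (a z) = 0"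
  unfolding diagonal_def by blast+

lemma diagonalI:
  assumes "\<And>n. n \<in> I \<Longrightarrow> a (e n) = eigenvalue n a *\<^sub>C e n"
    and "\<And>n z. n \<in> I \<Longrightarrow> cinner (e n) (a z) = eigenvalue n a * cinner (e n) z"
    and "\<And>y. y \<in> complement \<Longrightarrow> a y = 0"
    and "\<And>y z. y \<in> complement \<Longrightarrow> cinner y (a z) = 0"
  shows "diagonal a"
  unfolding diagonal_def using assms by blast

lemma eigenvalue_op_add: "eigenvalue n (op_add a b) = eigenvalue n a + eigenvalue n b"
  unfolding eigenvalue_def op_add_def by (simp add: cinner_add_right)

lemma eigenvalue_op_scale: "eigenvalue n (op_scale c a) = c * eigenvalue n a"
  unfolding eigenvalue_def op_scale_def by (simp add: cinner_scaleC_right)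

lemma diagonal_adjoint:
  assumes a: "diagonal a" and adj: "is_adjoint a S"
  shows "diagonal S"
proof -
  have S: "cinner u (S v) = cinner (a u) v" for u v
    using adj unfolding is_adjoint_def by simp
  have Se: "S (e n) = cnj (eigenvalue n a) *\<^sub>C e n" if n: "n \<in> I" for n
    by (rule cinner_ext_right) (metis S cinner_commute cinner_scaleC_right
        complex_cnj_mult diagonal_cinner_e[OF a n])
  have eigenvalue_S: "eigenvalue n S = cnj (eigenvalue n a)" if n: "n \<in> I" for n
    using Se[OF n] cinner_e_e[OF n n] by (simp add: eigenvalue_def cinner_scaleC_right)
  show ?thesis
  proof (rule diagonalI)
    show "S (e n) = eigenvalue n S *\<^sub>C e n" if n: "n \<in> I" for n
      using Se[OF n] eigenvalue_S[OF n] by simp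
    show "cinner (e n) (S z) = eigenvalue n S * cinner (e n) z" if n: "n \<in> I" for n z
      using S[of "e n" z] diagonal_apply_e[OF a n] eigenvalue_S[OF n]
      by (simp add: cinner_scaleC_left)
    show "S y = 0" if y: "y \<in> complement" for y
      by (rule cinner_ext_right) (metis S cinner_commute cinner_zero_right complex_cnj_zero
          diagonal_cinner_complement[OF a y])
    show "cinner y (S z) = 0" if y: "y \<in> complement" for y z
      using S[of y z] diagonal_apply_complement[OF a y] by simp
  qed
qed

lemma diagonal_rank_one:
  assumes m: "m \<in> I"
  shows "diagonal (rank_one (e m))"
proof (rule diagonalI)
  fix n assume n: "n \<in> I"
  have eigenvalue_rank_one: "eigenvalue n (rank_one (e m)) = (if n = m then 1 else 0)"
    by (simp add: eigenvalue_def rank_one_def cinner_scaleC_right cinner_e_e[OF m n] cinner_e_e[OF n m])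
  show "rank_one (e m) (e n) = eigenvalue n (rank_one (e m)) *\<^sub>C e n"
    unfolding eigenvalue_rank_one by (simp add: rank_one_def cinner_e_e[OF m n] scaleC_one)
  show "cinner (e n) (rank_one (e m) z) = eigenvalue n (rank_one (e m)) * cinner (e n) z" for z
    unfolding eigenvalue_rank_one by (simp add: rank_one_def cinner_scaleC_right cinner_e_e[OF n m])
next
  fix y assume "y \<in> complement"
  then have "cinner (e m) y = 0"
    using m unfolding complement_def by blast
  moreover have "cinner y (e m) = 0"
    using \<open>cinner (e m) y = 0\<close> by (subst cinner_commute) simp
  ultimately show "rank_one (e m) y = 0" "cinner y (rank_one (e m) z) = 0" for z
    by (simp_all add: rank_one_def cinner_scaleC_right)
qed

lemma diagonal_zero: "diagonal (\<lambda>x. 0)"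
  by (rule diagonalI) (simp_all add: eigenvalue_def)

lemma diagonal_op_add:
  assumes a: "diagonal a" and b: "diagonal b"
  shows "diagonal (op_add a b)"
proof (rule diagonalI, unfold eigenvalue_op_add)
  show "op_add a b (e n) = (eigenvalue n a + eigenvalue n b) *\<^sub>C e n" if "n \<in> I" for n
    using diagonal_apply_e[OF a that] diagonal_apply_e[OF b that]
    by (simp add: op_add_def scaleC_add_left)
  show "cinner (e n) (op_add a b z) = (eigenvalue n a + eigenvalue n b) * cinner (e n) z" if "n \<in> I" for n z
    using diagonal_cinner_e[OF a that] diagonal_cinner_e[OF b that]
    by (simp add: op_add_def cinner_add_right distrib_right)
  show "op_add a b y = 0" if "y \<in> complement" for y
    using diagonal_apply_complement[OF a that] diagonal_apply_complement[OF b that]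
    by (simp add: op_add_def)
  show "cinner y (op_add a b z) = 0" if "y \<in> complement" for y z
    using diagonal_cinner_complement[OF a that] diagonal_cinner_complement[OF b that]
    by (simp add: op_add_def cinner_add_right)
qed

lemma diagonal_op_scale:
  assumes a: "diagonal a"
  shows "diagonal (op_scale c a)"
proof (rule diagonalI, unfold eigenvalue_op_scale)
  show "op_scale c a (e n) = (c * eigenvalue n a) *\<^sub>C e n" if "n \<in> I" for n
    using diagonal_apply_e[OF a that] by (simp add: op_scale_def scaleC_scaleC)
  show "cinner (e n) (op_scale c a z) = (c * eigenvalue n a) * cinner (e n) z" if "n \<in> I" for n z
    using diagonal_cinner_e[OF a that] by (simp add: op_scale_def cinner_scaleC_right)
  show "op_scale c a y = 0" if "y \<in> complement" for y
    using diagonal_apply_complement[OF a that] by (simp add: op_scale_def)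
  show "cinner y (op_scale c a z) = 0" if "y \<in> complement" for y z
    using diagonal_cinner_complement[OF a that] by (simp add: op_scale_def cinner_scaleC_right)
qed

lemma diagonal_comp:
  assumes a: "diagonal a" and b: "diagonal b" and ba: "bounded_clinear a"
  shows "diagonal (a \<circ> b)"
proof -
  have eigenvalue_comp: "eigenvalue n (a \<circ> b) = eigenvalue n b * eigenvalue n a" if n: "n \<in> I" for n
  proof -
    have "eigenvalue n (a \<circ> b) = cinner (e n) (a (eigenvalue n b *\<^sub>C e n))"
      using diagonal_apply_e[OF b n] by (simp add: eigenvalue_def[of n "a \<circ> b"])
    then show ?thesis
      by (simp add: bounded_clinear_scaleC[OF ba] cinner_scaleC_right eigenvalue_def[of n a])
  qed
  show ?thesis
    by (rule diagonalI) (simp_all add: eigenvalue_comp diagonal_apply_e[OF a] diagonal_apply_e[OF b]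
        diagonal_cinner_e[OF a] diagonal_cinner_e[OF b] diagonal_apply_complement[OF b]
        diagonal_cinner_complement[OF a] bounded_clinear_scaleC[OF ba]
        bounded_clinear_zero[OF ba] scaleC_scaleC)
qed

lemma diagonal_limit:
  assumes diag: "\<And>k. diagonal (f k)" and bf: "\<And>k. bounded_clinear (f k)"
    and bT: "bounded_clinear T" and lim: "(\<lambda>k. onorm (\<lambda>x. f k x - T x)) \<longlonglongrightarrow> 0"
  shows "diagonal T"
proof -
  have f_T: "(\<lambda>k. f k z) \<longlonglongrightarrow> T z" for z
    by (rule onorm_tendsto_imp_tendsto[OF bf bT lim])
  have eigenvalue_T: "(\<lambda>k. eigenvalue n (f k)) \<longlonglongrightarrow> eigenvalue n T" for n
    unfolding eigenvalue_def by (rule tendsto_cinner_right[OF f_T])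
  show ?thesis
  proof (rule diagonalI)
    fix n assume n: "n \<in> I"
    have "(\<lambda>k. f k (e n)) \<longlonglongrightarrow> eigenvalue n T *\<^sub>C e n"
      using bounded_linear.tendsto[OF bounded_linear_scaleC_left eigenvalue_T]
      by (simp add: diagonal_apply_e[OF diag n])
    then show "T (e n) = eigenvalue n T *\<^sub>C e n"
      using f_T LIMSEQ_unique by blast
    fix z
    have "(\<lambda>k. cinner (e n) (f k z)) \<longlonglongrightarrow> eigenvalue n T * cinner (e n) z"
      using tendsto_mult[OF eigenvalue_T tendsto_const] by (simp add: diagonal_cinner_e[OF diag n])
    then show "cinner (e n) (T z) = eigenvalue n T * cinner (e n) z"
      using tendsto_cinner_right[OF f_T] LIMSEQ_unique by blast
  next
    fix y assume y: "y \<in> complement"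
    show "T y = 0"
      using f_T[of y] by (simp add: diagonal_apply_complement[OF diag y] LIMSEQ_const_iff)
    show "cinner y (T z) = 0" for z
      using tendsto_cinner_right[OF f_T, of y z]
      by (simp add: diagonal_cinner_complement[OF diag y] LIMSEQ_const_iff)
  qed
qed

lemma diagonal_algebraI:
  "a \<in> compact_ops \<Longrightarrow> diagonal a \<Longrightarrow> S \<in> compact_ops \<Longrightarrow> is_adjoint a S \<Longrightarrow>
    a \<in> diagonal_algebra"
  unfolding diagonal_algebra_def by blast

lemma diagonal_algebraD:
  "a \<in> diagonal_algebra \<Longrightarrow> a \<in> compact_ops"
  "a \<in> diagonal_algebra \<Longrightarrow> diagonal a"
  unfolding diagonal_algebra_def by blast+

lemma diagonal_algebraE:
  assumes "a \<in> diagonal_algebra"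
  obtains S where "S \<in> compact_ops" "is_adjoint a S"
  using assms unfolding diagonal_algebra_def by blast

lemma rank_one_in_diagonal_algebra:
  assumes "m \<in> I"
  shows "rank_one (e m) \<in> diagonal_algebra"
  by (rule diagonal_algebraI[OF rank_one_compact diagonal_rank_one[OF assms] rank_one_compact
        rank_one_self_adjoint])

lemma diagonal_algebra_zero: "(\<lambda>x. 0) \<in> diagonal_algebra"
proof (rule diagonal_algebraI)
  show "is_adjoint (\<lambda>x. 0) (\<lambda>x. 0::'h)"
    unfolding is_adjoint_def by simp
qed (rule compact_ops_zero diagonal_zero)+

lemma diagonal_algebra_op_add:
  assumes S: "S \<in> diagonal_algebra" and T: "T \<in> diagonal_algebra"
  shows "op_add S T \<in> diagonal_algebra"
proof -
  obtain S' where S': "S' \<in> compact_ops" "is_adjoint S S'"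
    using S by (rule diagonal_algebraE)
  obtain T' where T': "T' \<in> compact_ops" "is_adjoint T T'"
    using T by (rule diagonal_algebraE)
  have adj: "is_adjoint (op_add S T) (op_add S' T')"
    using S'(2) T'(2) unfolding is_adjoint_def op_add_def
    by (simp add: cinner_add_left cinner_add_right)
  show ?thesis
    by (rule diagonal_algebraI[OF compact_ops_op_add diagonal_op_add compact_ops_op_add adj])
      (simp_all add: diagonal_algebraD S T S'(1) T'(1))
qed

lemma diagonal_algebra_op_scale:
  assumes T: "T \<in> diagonal_algebra"
  shows "op_scale c T \<in> diagonal_algebra"
proof -
  obtain T' where T': "T' \<in> compact_ops" "is_adjoint T T'"
    using T by (rule diagonal_algebraE)
  have adj: "is_adjoint (op_scale c T) (op_scale (cnj c) T')"
    using T'(2) unfolding is_adjoint_def op_scale_def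
    by (simp add: cinner_scaleC_left cinner_scaleC_right)
  show ?thesis
    by (rule diagonal_algebraI[OF compact_ops_op_scale diagonal_op_scale compact_ops_op_scale adj])
      (simp_all add: diagonal_algebraD T T'(1))
qed

lemma diagonal_algebra_comp:
  assumes S: "S \<in> diagonal_algebra" and T: "T \<in> diagonal_algebra"
  shows "S \<circ> T \<in> diagonal_algebra"
proof -
  obtain S' where S': "S' \<in> compact_ops" "is_adjoint S S'"
    using S by (rule diagonal_algebraE)
  obtain T' where T': "T' \<in> compact_ops" "is_adjoint T T'"
    using T by (rule diagonal_algebraE)
  have adj: "is_adjoint (S \<circ> T) (T' \<circ> S')"
    using S'(2) T'(2) unfolding is_adjoint_def by simp
  show ?thesis
    by (rule diagonal_algebraI[OF compact_ops_comp diagonal_comp compact_ops_comp adj])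
      (simp_all add: diagonal_algebraD S T S'(1) T'(1) compact_ops_imp_bounded_clinear)
qed

lemma diagonal_algebra_adjoint:
  assumes T: "T \<in> diagonal_algebra"
  shows "\<exists>S\<in>diagonal_algebra. is_adjoint T S"
proof -
  obtain S where S: "S \<in> compact_ops" "is_adjoint T S"
    using T by (rule diagonal_algebraE)
  have "S \<in> diagonal_algebra"
    by (rule diagonal_algebraI[OF S(1) diagonal_adjoint[OF diagonal_algebraD(2)[OF T] S(2)]
          diagonal_algebraD(1)[OF T] is_adjoint_sym[OF S(2)]])
  then show ?thesis
    using S(2) by blast
qed

lemma diagonal_algebra_closed:
  assumes f: "\<And>k. f k \<in> diagonal_algebra" and bT: "bounded_clinear T"
    and lim: "(\<lambda>k. onorm (\<lambda>x. f k x - T x)) \<longlonglongrightarrow> 0"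
  shows "T \<in> diagonal_algebra"
proof -
  have fc: "f k \<in> compact_ops" for k
    using f by (rule diagonal_algebraD)
  have bf: "bounded_clinear (f k)" for k
    using fc by (rule compact_ops_imp_bounded_clinear)
  have "\<exists>S. S \<in> compact_ops \<and> is_adjoint (f k) S" for k
    using f by (meson diagonal_algebraE)
  then obtain g where g: "\<And>k. g k \<in> compact_ops" "\<And>k. is_adjoint (f k) (g k)"
    by metis
  obtain S where S: "is_adjoint T S" "bounded_clinear S"
    "(\<lambda>k. onorm (\<lambda>x. g k x - S x)) \<longlonglongrightarrow> 0"
    using adjoint_of_limit[OF bf g(2) bT lim] by blast
  show ?thesis
  proof (rule diagonal_algebraI)
    show "T \<in> compact_ops"
      by (rule compact_ops_closed[OF fc bT lim])
    show "diagonal T"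
      using diagonal_limit[OF diagonal_algebraD(2)[OF f] bf bT lim] .
    show "S \<in> compact_ops"
      by (rule compact_ops_closed[OF g(1) S(2,3)])
  qed (rule S(1))
qed

lemma cstar_subalgebra_diagonal_algebra: "cstar_subalgebra diagonal_algebra"
  unfolding cstar_subalgebra_def
proof (intro conjI ballI allI impI)
  show "diagonal_algebra \<subseteq> compact_ops"
    using diagonal_algebraD(1) by blast
  show "T \<in> diagonal_algebra"
    if "(\<forall>n. f n \<in> diagonal_algebra) \<and> bounded_clinear T \<and>
      (\<lambda>n. onorm (\<lambda>x. f n x - T x)) \<longlonglongrightarrow> 0" for f T
    using that diagonal_algebra_closed by blast
qed (simp_all add: diagonal_algebra_zero diagonal_algebra_op_add diagonal_algebra_op_scale
    diagonal_algebra_comp diagonal_algebra_adjoint)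

section \<open>Density of the span of the family and its complement\<close>

lemma cinner_e_sum:
  assumes F: "finite F" "F \<subseteq> I" and n: "n \<in> I"
  shows "cinner (e n) (\<Sum>m\<in>F. a m *\<^sub>C e m) = (if n \<in> F then a n else 0)"
proof -
  have "cinner (e n) (\<Sum>m\<in>F. a m *\<^sub>C e m) = (\<Sum>m\<in>F. if m = n then a n else 0)"
    using F n by (intro trans[OF cinner_sum_right] sum.cong)
      (auto simp: cinner_scaleC_right cinner_e_e)
  then show ?thesis
    using F(1) by (simp add: sum.delta)
qed

lemma norm_sum_e_squared:
  assumes F: "finite F" "F \<subseteq> I"
  shows "(norm (\<Sum>m\<in>F. a m *\<^sub>C e m))\<^sup>2 = (\<Sum>m\<in>F. (cmod (a m))\<^sup>2)"
proof -
  let ?u = "\<Sum>m\<in>F. a m *\<^sub>C e m"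
  have "complex_of_real ((norm ?u)\<^sup>2) = cinner ?u ?u"
    by (rule cinner_norm[symmetric])
  also have "\<dots> = (\<Sum>n\<in>F. cnj (a n) * cinner (e n) ?u)"
    by (simp add: cinner_sum_left cinner_scaleC_left)
  also have "\<dots> = (\<Sum>n\<in>F. complex_of_real ((cmod (a n))\<^sup>2))"
  proof (rule sum.cong)
    fix n assume "n \<in> F"
    then have "cinner (e n) ?u = a n"
      using cinner_e_sum[OF F] F(2) by auto
    then show "cnj (a n) * cinner (e n) ?u = complex_of_real ((cmod (a n))\<^sup>2)"
      by (simp add: cnj_mult_self)
  qed simp
  finally show ?thesis
    by (metis of_real_eq_iff of_real_sum)
qed

lemma bessel_inequality:
  assumes F: "finite F" "F \<subseteq> I"
  shows "(\<Sum>m\<in>F. (cmod (cinner (e m) x))\<^sup>2) \<le> (norm x)\<^sup>2"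
proof -
  let ?s = "\<Sum>m\<in>F. cinner (e m) x *\<^sub>C e m"
  define r where "r = (\<Sum>m\<in>F. (cmod (cinner (e m) x))\<^sup>2)"
  have sx: "cinner ?s x = complex_of_real r"
    unfolding r_def by (simp add: cinner_sum_left cinner_scaleC_left cnj_mult_self)
  have xs: "cinner x ?s = complex_of_real r"
    by (metis cinner_commute complex_cnj_complex_of_real sx)
  have ss: "cinner ?s ?s = complex_of_real r"
    using norm_sum_e_squared[OF F] unfolding r_def by (simp add: cinner_norm)
  have "complex_of_real ((norm (x - ?s))\<^sup>2) = cinner (x - ?s) (x - ?s)"
    by (rule cinner_norm[symmetric])
  also have "\<dots> = cinner x x - complex_of_real r"
    by (simp add: cinner_diff_left cinner_diff_right sx xs ss)
  also have "\<dots> = complex_of_real ((norm x)\<^sup>2 - r)"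
    by (simp add: cinner_norm[of x])
  finally have "(norm (x - ?s))\<^sup>2 = (norm x)\<^sup>2 - r"
    using of_real_eq_iff by blast
  then show ?thesis
    unfolding r_def by (metis diff_ge_0_iff_ge zero_le_power2)
qed

definition partial_sum :: "'h \<Rightarrow> nat \<Rightarrow> 'h" where
  "partial_sum x N = (\<Sum>m\<in>{m\<in>I. m < N}. cinner (e m) x *\<^sub>C e m)"

lemma norm_partial_sum_diff:
  assumes "m \<le> n"
  shows "(norm (partial_sum x n - partial_sum x m))\<^sup>2 =
    (\<Sum>i\<in>{i\<in>I. m \<le> i \<and> i < n}. (cmod (cinner (e i) x))\<^sup>2)"
proof -
  have J: "finite {i\<in>I. m \<le> i \<and> i < n}" "{i\<in>I. m \<le> i \<and> i < n} \<subseteq> I"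
    by auto
  have "partial_sum x n - partial_sum x m =
      (\<Sum>i\<in>{i\<in>I. i < n} - {i\<in>I. i < m}. cinner (e i) x *\<^sub>C e i)"
    unfolding partial_sum_def using assms by (intro sum_diff[symmetric]) auto
  also have "{i\<in>I. i < n} - {i\<in>I. i < m} = {i\<in>I. m \<le> i \<and> i < n}"
    by auto
  finally show ?thesis
    by (simp add: norm_sum_e_squared[OF J])
qed

lemma partial_sum_convergent: "convergent (partial_sum x)"
proof -
  define t where "t i = (if i \<in> I then (cmod (cinner (e i) x))\<^sup>2 else 0)" for i
  have sum_t: "sum t A = (\<Sum>i\<in>{i\<in>A. i \<in> I}. (cmod (cinner (e i) x))\<^sup>2)" if "finite A" for A
    unfolding t_def using that by (simp add: sum.inter_filter)
  have "summable t"
  proof (rule summableI_nonneg_bounded)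
    show "(\<Sum>i<n. t i) \<le> (norm x)\<^sup>2" for n
      using sum_t[of "{..<n}"] bessel_inequality[of "{i. i < n \<and> i \<in> I}" x] by auto
  qed (simp add: t_def)
  then have t_Cauchy: "\<exists>N. \<forall>m\<ge>N. \<forall>n. norm (sum t {m..<n}) < r" if "r > 0" for r
    using that by (simp add: summable_Cauchy)
  have dist_eq: "dist (partial_sum x m) (partial_sum x n) = sqrt (sum t {m..<n})"
    if "m \<le> n" for m n
    using norm_partial_sum_diff[OF that, of x] sum_t[of "{m..<n}"]
    by (simp add: dist_norm real_sqrt_unique conj_commute conj_left_commute)
      (simp add: norm_minus_commute)
  show ?thesis
    unfolding Cauchy_convergent_iff[symmetric]
  proof (rule metric_CauchyI)
    fix r :: real assume r: "r > 0"
    then obtain N where N: "\<And>m n. m \<ge> N \<Longrightarrow> norm (sum t {m..<n}) < r\<^sup>2"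
      using t_Cauchy[of "r\<^sup>2"] by auto
    have le: "dist (partial_sum x m) (partial_sum x n) < r" if "m \<ge> N" "m \<le> n" for m n
      using N[OF that(1), of n] r by (simp add: dist_eq[OF that(2)] real_sqrt_less_iff real_less_lsqrt)
    have "dist (partial_sum x m) (partial_sum x n) < r" if "m \<ge> N" "n \<ge> N" for m n
      using le[of m n] le[of n m] that by (cases "m \<le> n") (auto simp: dist_commute)
    then show "\<exists>M. \<forall>m\<ge>M. \<forall>n\<ge>M. dist (partial_sum x m) (partial_sum x n) < r"
      by blast
  qed
qed

lemma partial_sum_limit_in_complement:
  obtains s where "partial_sum x \<longlonglongrightarrow> s" "x - s \<in> complement"
proof -
  obtain s where s: "partial_sum x \<longlonglongrightarrow> s"
    using partial_sum_convergent convergent_def by blast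
  have "cinner (e n) s = cinner (e n) x" if n: "n \<in> I" for n
  proof -
    have "\<forall>\<^sub>F N in sequentially. cinner (e n) (partial_sum x N) = cinner (e n) x"
      unfolding eventually_sequentially partial_sum_def
      using n by (intro exI[of _ "Suc n"]) (simp add: cinner_e_sum)
    then have "(\<lambda>N. cinner (e n) (partial_sum x N)) \<longlonglongrightarrow> cinner (e n) x"
      by (rule tendsto_eventually)
    then show ?thesis
      using tendsto_cinner_right[OF s] LIMSEQ_unique by blast
  qed
  then show ?thesis
    using s that unfolding complement_def by (simp add: cinner_diff_right)
qed

lemma additive_functional_eq_0:
  fixes f :: "'h \<Rightarrow> complex"
  assumes add: "\<And>u v. f (u + v) = f u + f v"
    and on_e: "\<And>c n. n \<in> I \<Longrightarrow> f (c *\<^sub>C e n) = 0"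
    and on_complement: "\<And>y. y \<in> complement \<Longrightarrow> f y = 0"
    and cont: "\<And>X l. X \<longlonglongrightarrow> l \<Longrightarrow> (\<lambda>k. f (X k)) \<longlonglongrightarrow> f l"
  shows "f x = 0"
proof -
  have f0: "f 0 = 0"
    using add[of 0 0] by simp
  have f_sum: "f (\<Sum>m\<in>F. c m *\<^sub>C e m) = 0" if "finite F" "F \<subseteq> I" for F c
    using that by (induction F rule: finite_induct) (simp_all add: f0 add on_e)
  obtain s where s: "partial_sum x \<longlonglongrightarrow> s" "x - s \<in> complement"
    by (rule partial_sum_limit_in_complement)
  have "(\<lambda>k. f (partial_sum x k)) \<longlonglongrightarrow> f s"
    using cont[OF s(1)] .
  then have "f s = 0"
    by (simp add: partial_sum_def f_sum LIMSEQ_const_iff)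
  then show ?thesis
    using add[of "x - s" s] on_complement[OF s(2)] by simp
qed

lemma operator_eq_0_if_entries_vanish:
  assumes T: "bounded_clinear T"
    and entries: "\<And>x y. x \<in> complement \<union> e ` I \<Longrightarrow> y \<in> complement \<union> e ` I \<Longrightarrow>
      cinner y (T x) = 0"
  shows "T = (\<lambda>x. 0)"
proof -
  have column: "cinner y (T x) = 0" if x: "x \<in> complement \<union> e ` I" for x y
    by (rule additive_functional_eq_0[where f="\<lambda>y. cinner y (T x)"])
      (auto simp: cinner_add_left cinner_scaleC_left entries[OF x] intro: tendsto_cinner_left)
  have "cinner y (T x) = 0" for x y
    by (rule additive_functional_eq_0[where f="\<lambda>x. cinner y (T x)"])
      (auto simp: bounded_clinear_add[OF T] bounded_clinear_scaleC[OF T] cinner_add_right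
        cinner_scaleC_right column intro: tendsto_cinner_right bounded_clinear_tendsto[OF T])
  then show ?thesis
    by (metis cinner_self_eq_0)
qed

end

lemma derivation_K_compact_ops: "derivation_K D \<Longrightarrow> a \<in> compact_ops \<Longrightarrow> D a \<in> compact_ops"
  and derivation_K_op_scale:
    "derivation_K D \<Longrightarrow> a \<in> compact_ops \<Longrightarrow> D (op_scale c a) = op_scale c (D a)"
  and derivation_K_Leibniz: "derivation_K D \<Longrightarrow> a \<in> compact_ops \<Longrightarrow> b \<in> compact_ops \<Longrightarrow>
    D (a \<circ> b) = op_add (D a \<circ> b) (a \<circ> D b)"
  unfolding derivation_K_def by blast+

lemma derivation_K_zero: "derivation_K D \<Longrightarrow> D (\<lambda>x. 0::'h::chilbert_space) = (\<lambda>x. 0)"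
  using derivation_K_op_scale[OF _ compact_ops_zero, of D 0]
  by (simp add: op_scale_def)

lemma dual_K_cinner_apply: "dual_K (\<lambda>c. cinner y (c (x::'h::chilbert_space)))"
  unfolding dual_K_def
proof (intro conjI ballI allI)
  show "cinner y (op_add a b x) = cinner y (a x) + cinner y (b x)" for a b
    unfolding op_add_def by (simp add: cinner_add_right)
  show "cinner y (op_scale c a x) = c * cinner y (a x)" for c a
    unfolding op_scale_def by (simp add: cinner_scaleC_right)
  have "cmod (cinner y (a x)) \<le> (norm y * norm x) * onorm a" if "a \<in> compact_ops" for a
  proof -
    have "cmod (cinner y (a x)) \<le> norm y * norm (a x)"
      by (rule norm_cinner_le)
    also have "\<dots> \<le> norm y * (onorm a * norm x)"
      by (intro mult_left_mono onorm bounded_clinear_imp_bounded_linear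
          compact_ops_imp_bounded_clinear that) simp
    finally show ?thesis
      by (simp add: algebra_simps)
  qed
  then show "\<exists>C. \<forall>a\<in>compact_ops. cmod (cinner y (a x)) \<le> C * onorm a"
    by blast
qed

text \<open>A linear relation between the \<open>(y, x)\<close> entries of \<open>D a\<close> and \<open>D b\<close> that holds for every
  derivation \<open>D\<close> also holds for \<open>\<Delta>\<close>: test weak-2-locality at \<open>(a, b)\<close> with \<open>c \<mapsto> \<langle>y, c x\<rangle>\<close>.\<close>
lemma weak_2_local_derivation_K_relation:
  assumes \<Delta>: "weak_2_local_derivation_K \<Delta>" and a: "a \<in> compact_ops" and b: "b \<in> compact_ops"
    and rel: "\<And>D. derivation_K D \<Longrightarrow>
      \<alpha> * cinner y (D a x) = \<kappa> * cinner y (D b (x::'h::chilbert_space))"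
  shows "\<alpha> * cinner y (\<Delta> a x) = \<kappa> * cinner y (\<Delta> b x)"
proof -
  obtain D where "derivation_K D" "cinner y (\<Delta> a x) = cinner y (D a x)"
    "cinner y (\<Delta> b x) = cinner y (D b x)"
    using \<Delta> a b dual_K_cinner_apply[of y x] unfolding weak_2_local_derivation_K_def by blast
  then show ?thesis
    using rel by simp
qed

lemma weak_2_local_derivation_K_bounded_clinear:
  "weak_2_local_derivation_K \<Delta> \<Longrightarrow> a \<in> compact_ops \<Longrightarrow> bounded_clinear (\<Delta> a)"
  unfolding weak_2_local_derivation_K_def by (blast intro: compact_ops_imp_bounded_clinear)

section \<open>Matrix entries of weak-2-local derivations on the diagonal algebra\<close>

context orthonormal_family
begin

lemma derivation_apply_e:
  assumes D: "derivation_K D" and a: "a \<in> compact_ops" "diagonal a" and m: "m \<in> I"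
  shows "D a (e m) = eigenvalue m a *\<^sub>C D (rank_one (e m)) (e m) - a (D (rank_one (e m)) (e m))"
proof -
  have ba: "bounded_clinear a"
    using a(1) by (rule compact_ops_imp_bounded_clinear)
  have "a \<circ> rank_one (e m) = op_scale (eigenvalue m a) (rank_one (e m))"
    using diagonal_apply_e[OF a(2) m]
    by (auto simp: rank_one_def op_scale_def bounded_clinear_scaleC[OF ba] scaleC_scaleC mult.commute)
  then have "op_add (D a \<circ> rank_one (e m)) (a \<circ> D (rank_one (e m))) =
      op_scale (eigenvalue m a) (D (rank_one (e m)))"
    using derivation_K_Leibniz[OF D a(1) rank_one_compact[of "e m"]]
      derivation_K_op_scale[OF D rank_one_compact[of "e m"]] by simp
  from fun_cong[OF this, of "e m"] show ?thesis
    using cinner_e_e[OF m m] by (simp add: op_add_def op_scale_def rank_one_def scaleC_one eq_diff_eq)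
qed

lemma derivation_apply_complement:
  assumes D: "derivation_K D" and a: "a \<in> compact_ops" "diagonal a" and x: "x \<in> complement"
  shows "cinner x x *\<^sub>C D a x = - a (D (rank_one x) x)"
proof -
  have ba: "bounded_clinear a"
    using a(1) by (rule compact_ops_imp_bounded_clinear)
  have bDa: "bounded_clinear (D a)"
    by (rule compact_ops_imp_bounded_clinear[OF derivation_K_compact_ops[OF D a(1)]])
  have "a \<circ> rank_one x = (\<lambda>z. 0)"
    by (auto simp: rank_one_def bounded_clinear_scaleC[OF ba] diagonal_apply_complement[OF a(2) x])
  then have "op_add (D a \<circ> rank_one x) (a \<circ> D (rank_one x)) = (\<lambda>z. 0)"
    using derivation_K_Leibniz[OF D a(1) rank_one_compact[of x]] derivation_K_zero[OF D] by simp
  from fun_cong[OF this, of x] show ?thesis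
    by (simp add: op_add_def rank_one_def bounded_clinear_scaleC[OF bDa] eq_neg_iff_add_eq_0)
qed

context
  fixes \<Delta> :: "('h \<Rightarrow> 'h) \<Rightarrow> ('h \<Rightarrow> 'h)"
  assumes \<Delta>: "weak_2_local_derivation_K \<Delta>"
begin

lemma cinner_e_Delta_e:
  assumes a: "a \<in> compact_ops" "diagonal a" and m: "m \<in> I" and n: "n \<in> I"
  shows "cinner (e n) (\<Delta> a (e m)) =
    (eigenvalue m a - eigenvalue n a) * cinner (e n) (\<Delta> (rank_one (e m)) (e m))"
proof -
  have "1 * cinner (e n) (\<Delta> a (e m)) =
      (eigenvalue m a - eigenvalue n a) * cinner (e n) (\<Delta> (rank_one (e m)) (e m))"
  proof (rule weak_2_local_derivation_K_relation[OF \<Delta> a(1) rank_one_compact])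
    fix D :: "('h \<Rightarrow> 'h) \<Rightarrow> 'h \<Rightarrow> 'h" assume D: "derivation_K D"
    show "1 * cinner (e n) (D a (e m)) =
        (eigenvalue m a - eigenvalue n a) * cinner (e n) (D (rank_one (e m)) (e m))"
      unfolding derivation_apply_e[OF D a m] using diagonal_cinner_e[OF a(2) n]
      by (simp add: cinner_diff_right cinner_scaleC_right algebra_simps)
  qed
  then show ?thesis
    by simp
qed

lemma cinner_complement_Delta_e:
  assumes a: "a \<in> compact_ops" "diagonal a" and m: "m \<in> I" and y: "y \<in> complement"
  shows "cinner y (\<Delta> a (e m)) = eigenvalue m a * cinner y (\<Delta> (rank_one (e m)) (e m))"
proof -
  have "1 * cinner y (\<Delta> a (e m)) = eigenvalue m a * cinner y (\<Delta> (rank_one (e m)) (e m))"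
  proof (rule weak_2_local_derivation_K_relation[OF \<Delta> a(1) rank_one_compact])
    fix D :: "('h \<Rightarrow> 'h) \<Rightarrow> 'h \<Rightarrow> 'h" assume D: "derivation_K D"
    show "1 * cinner y (D a (e m)) = eigenvalue m a * cinner y (D (rank_one (e m)) (e m))"
      unfolding derivation_apply_e[OF D a m] using diagonal_cinner_complement[OF a(2) y]
      by (simp add: cinner_diff_right cinner_scaleC_right)
  qed
  then show ?thesis
    by simp
qed

lemma cinner_e_Delta_complement:
  assumes a: "a \<in> compact_ops" "diagonal a" and x: "x \<in> complement" and n: "n \<in> I"
  shows "cinner x x * cinner (e n) (\<Delta> a x) = - eigenvalue n a * cinner (e n) (\<Delta> (rank_one x) x)"
proof (rule weak_2_local_derivation_K_relation[OF \<Delta> a(1) rank_one_compact])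
  fix D :: "('h \<Rightarrow> 'h) \<Rightarrow> 'h \<Rightarrow> 'h" assume D: "derivation_K D"
  have "cinner x x * cinner (e n) (D a x) = cinner (e n) (cinner x x *\<^sub>C D a x)"
    by (simp add: cinner_scaleC_right)
  also have "\<dots> = - eigenvalue n a * cinner (e n) (D (rank_one x) x)"
    unfolding derivation_apply_complement[OF D a x] using diagonal_cinner_e[OF a(2) n]
    by (simp add: cinner_minus_right)
  finally show "cinner x x * cinner (e n) (D a x) = - eigenvalue n a * cinner (e n) (D (rank_one x) x)" .
qed

lemma cinner_complement_Delta_complement:
  assumes a: "a \<in> compact_ops" "diagonal a" and x: "x \<in> complement" and y: "y \<in> complement"
  shows "cinner x x * cinner y (\<Delta> a x) = 0"
proof -
  have "cinner x x * cinner y (\<Delta> a x) = 0 * cinner y (\<Delta> (rank_one x) x)"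
  proof (rule weak_2_local_derivation_K_relation[OF \<Delta> a(1) rank_one_compact])
    fix D :: "('h \<Rightarrow> 'h) \<Rightarrow> 'h \<Rightarrow> 'h" assume D: "derivation_K D"
    have "cinner x x * cinner y (D a x) = cinner y (cinner x x *\<^sub>C D a x)"
      by (simp add: cinner_scaleC_right)
    also have "\<dots> = 0"
      unfolding derivation_apply_complement[OF D a x] using diagonal_cinner_complement[OF a(2) y]
      by (simp add: cinner_minus_right)
    finally show "cinner x x * cinner y (D a x) = 0 * cinner y (D (rank_one x) x)"
      by simp
  qed
  then show ?thesis
    by simp
qed

lemma entries_Delta_additive_e:
  assumes a: "a \<in> diagonal_algebra" and b: "b \<in> diagonal_algebra"
    and m: "m \<in> I" and y: "y \<in> complement \<union> e ` I"
  shows "cinner y (\<Delta> (op_add a b) (e m)) = cinner y (\<Delta> a (e m)) + cinner y (\<Delta> b (e m))"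
proof -
  note s = diagonal_algebraD[OF diagonal_algebra_op_add[OF a b]]
    and a = diagonal_algebraD[OF a] and b = diagonal_algebraD[OF b]
  show ?thesis
  proof (cases "y \<in> complement")
    case True
    then show ?thesis
      unfolding cinner_complement_Delta_e[OF s m True]
        cinner_complement_Delta_e[OF a m True] cinner_complement_Delta_e[OF b m True] eigenvalue_op_add
      by (simp add: algebra_simps)
  next
    case False
    then obtain n where n: "n \<in> I" "y = e n"
      using y by blast
    then show ?thesis
      unfolding n(2) cinner_e_Delta_e[OF s m n(1)] cinner_e_Delta_e[OF a m n(1)]
        cinner_e_Delta_e[OF b m n(1)] eigenvalue_op_add
      by (simp add: algebra_simps)
  qed
qed

lemma entries_Delta_additive_complement:
  assumes a: "a \<in> diagonal_algebra" and b: "b \<in> diagonal_algebra"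
    and x: "x \<in> complement" and y: "y \<in> complement \<union> e ` I"
  shows "cinner y (\<Delta> (op_add a b) x) = cinner y (\<Delta> a x) + cinner y (\<Delta> b x)"
proof (cases "x = 0")
  case True
  then show ?thesis
    using weak_2_local_derivation_K_bounded_clinear[OF \<Delta>] a b diagonal_algebra_op_add[OF a b]
    by (simp add: bounded_clinear_zero diagonal_algebraD)
next
  case False
  note s = diagonal_algebraD[OF diagonal_algebra_op_add[OF a b]]
    and a = diagonal_algebraD[OF a] and b = diagonal_algebraD[OF b]
  have "cinner x x * cinner y (\<Delta> (op_add a b) x) =
      cinner x x * cinner y (\<Delta> a x) + cinner x x * cinner y (\<Delta> b x)"
  proof (cases "y \<in> complement")
    case True
    then show ?thesis
      using cinner_complement_Delta_complement[OF s x True]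
        cinner_complement_Delta_complement[OF a x True]
        cinner_complement_Delta_complement[OF b x True]
      by (simp only:) simp
  next
    case False
    then obtain n where n: "n \<in> I" "y = e n"
      using y by blast
    then show ?thesis
      unfolding n(2) cinner_e_Delta_complement[OF s x n(1)]
        cinner_e_Delta_complement[OF a x n(1)] cinner_e_Delta_complement[OF b x n(1)] eigenvalue_op_add
      by (simp add: algebra_simps)
  qed
  then have "cinner x x * cinner y (\<Delta> (op_add a b) x) =
      cinner x x * (cinner y (\<Delta> a x) + cinner y (\<Delta> b x))"
    by (simp only: distrib_left)
  then show ?thesis
    using False by simp
qed

lemma entries_Delta_additive:
  "a \<in> diagonal_algebra \<Longrightarrow> b \<in> diagonal_algebra \<Longrightarrow>
    x \<in> complement \<union> e ` I \<Longrightarrow> y \<in> complement \<union> e ` I \<Longrightarrow>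
    cinner y (\<Delta> (op_add a b) x) = cinner y (\<Delta> a x) + cinner y (\<Delta> b x)"
  using entries_Delta_additive_e entries_Delta_additive_complement by blast

lemma Delta_op_add:
  assumes a: "a \<in> diagonal_algebra" and b: "b \<in> diagonal_algebra"
  shows "\<Delta> (op_add a b) = op_add (\<Delta> a) (\<Delta> b)"
proof -
  have bcl: "bounded_clinear (\<Delta> t)" if "t \<in> diagonal_algebra" for t
    using weak_2_local_derivation_K_bounded_clinear[OF \<Delta> diagonal_algebraD(1)[OF that]] .
  have "(\<lambda>z. \<Delta> (op_add a b) z - \<Delta> a z - \<Delta> b z) = (\<lambda>z. 0)"
  proof (rule operator_eq_0_if_entries_vanish)
    show "bounded_clinear (\<lambda>z. \<Delta> (op_add a b) z - \<Delta> a z - \<Delta> b z)"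
      using bcl[OF diagonal_algebra_op_add[OF a b]] bcl[OF a] bcl[OF b]
      by (intro bounded_clinear_diff)
    show "cinner y (\<Delta> (op_add a b) x - \<Delta> a x - \<Delta> b x) = 0"
      if "x \<in> complement \<union> e ` I" "y \<in> complement \<union> e ` I" for x y
      using entries_Delta_additive[OF a b that] by (simp add: cinner_diff_right)
  qed
  then show ?thesis
  proof (intro ext)
    fix z
    assume "(\<lambda>z. \<Delta> (op_add a b) z - \<Delta> a z - \<Delta> b z) = (\<lambda>z. 0)"
    from fun_cong[OF this, of z] show "\<Delta> (op_add a b) z = op_add (\<Delta> a) (\<Delta> b) z"
      by (simp add: op_add_def diff_diff_eq)
  qed
qed

end

end

theorem proposition3p5:
  fixes \<Delta> :: "('h::chilbert_space \<Rightarrow> 'h) \<Rightarrow> ('h \<Rightarrow> 'h)"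
    and p :: "nat \<Rightarrow> ('h \<Rightarrow> 'h)"
    and I :: "nat set"
  assumes "weak_2_local_derivation_K \<Delta>"
    and "\<And>n. n \<in> I \<Longrightarrow> minimal_projection (p n)"
    and "\<And>n m. n \<in> I \<Longrightarrow> m \<in> I \<Longrightarrow> n \<noteq> m \<Longrightarrow> p n \<circ> p m = (\<lambda>x. 0)"
  shows "\<forall>a \<in> generated_cstar (p ` I). \<forall>b \<in> generated_cstar (p ` I).
           \<Delta> (op_add a b) = op_add (\<Delta> a) (\<Delta> b)"
proof -
  have "\<forall>n\<in>I. \<exists>v. norm v = 1 \<and> p n = rank_one v"
    using minimal_projection_rank_one assms(2) by blast
  then obtain e where e: "\<And>n. n \<in> I \<Longrightarrow> norm (e n) = 1 \<and> p n = rank_one (e n)"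
    by metis
  interpret orthonormal_family e I
  proof
    show "norm (e n) = 1" if "n \<in> I" for n
      using e[OF that] by blast
    show "cinner (e n) (e m) = 0" if "n \<in> I" "m \<in> I" "n \<noteq> m" for n m
    proof (rule rank_one_comp_eq_0_imp_orthogonal)
      show "e n \<noteq> 0" "e m \<noteq> 0"
        using e[OF that(1)] e[OF that(2)] by auto
      show "rank_one (e n) \<circ> rank_one (e m) = (\<lambda>x. 0)"
        using assms(3)[OF that] e[OF that(1)] e[OF that(2)] by simp
    qed
  qed
  have "p ` I \<subseteq> diagonal_algebra"
    using e rank_one_in_diagonal_algebra by auto
  then have "generated_cstar (p ` I) \<subseteq> diagonal_algebra"
    unfolding generated_cstar_def using cstar_subalgebra_diagonal_algebra by blast
  then show ?thesis
    using Delta_op_add[OF assms(1)] by blast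
qed

end
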